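(* Fix $k\in\mathbb{N}$ with $k\ge2$ and let $S=\mathbb{N}_0\cup\mathbb{R}_{\ge k}$. Then $S$ is a positive semiring that is a BFS but not an FFS.
   Context: A positive semiring is a subset of $\mathbb{R}_{\ge0}$ containing $0$ and $1$ and closed under the usual addition and multiplication. For such $S$, $S^*=S\setminus\{0\}$ is a multiplicative monoid; an atom is a nonunit $a\in S^*$ with $a=bc$ ($b,c\in S^*$) forcing $b$ or $c$ to be a unit; $S$ is atomic if every nonunit of $S^*$ is a finite product of atoms. $S$ is a BFS if it is atomic and every nonunit has a finite set of factorization lengths; $S$ is an FFS if it is atomic and every element of $S^*$ has only finitely many factorizations into atoms up to order and associates. *)

theory Defs
  imports Main "HOL-Library.Multiset" Complex_Main
begin

definition positive_semiring :: "real set \<Rightarrow> bool" where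
  "positive_semiring S \<longleftrightarrow> S \<subseteq> {0..} \<and> 0 \<in> S \<and> 1 \<in> S \<and>
     (\<forall>x\<in>S. \<forall>y\<in>S. x + y \<in> S) \<and> (\<forall>x\<in>S. \<forall>y\<in>S. x * y \<in> S)"

definition sr_unit :: "real set \<Rightarrow> real \<Rightarrow> bool" where
  "sr_unit S u \<longleftrightarrow> u \<in> S - {0} \<and> (\<exists>v\<in>S - {0}. u * v = 1)"

definition sr_atom :: "real set \<Rightarrow> real \<Rightarrow> bool" where
  "sr_atom S a \<longleftrightarrow> a \<in> S - {0} \<and> \<not> sr_unit S a \<and>
     (\<forall>b\<in>S - {0}. \<forall>c\<in>S - {0}. a = b * c \<longrightarrow> sr_unit S b \<or> sr_unit S c)"

definition sr_factorizations :: "real set \<Rightarrow> real \<Rightarrow> real multiset set" where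
  "sr_factorizations S x = {m. (\<forall>a\<in>#m. sr_atom S a) \<and> prod_mset m = x}"

definition sr_atomic :: "real set \<Rightarrow> bool" where
  "sr_atomic S \<longleftrightarrow> (\<forall>x\<in>S - {0}. \<not> sr_unit S x \<longrightarrow>
       (\<exists>m\<in>sr_factorizations S x. m \<noteq> {#}))"

definition sr_lengths :: "real set \<Rightarrow> real \<Rightarrow> nat set" where
  "sr_lengths S x = size ` sr_factorizations S x"

definition sr_BFS :: "real set \<Rightarrow> bool" where
  "sr_BFS S \<longleftrightarrow> sr_atomic S \<and>
     (\<forall>x\<in>S - {0}. \<not> sr_unit S x \<longrightarrow> finite (sr_lengths S x))"

definition sr_assoc_class :: "real set \<Rightarrow> real \<Rightarrow> real set" where
  "sr_assoc_class S a = {u * a | u. sr_unit S u}"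

definition sr_factorizations_mod_assoc :: "real set \<Rightarrow> real \<Rightarrow> real set multiset set" where
  "sr_factorizations_mod_assoc S x = image_mset (sr_assoc_class S) ` sr_factorizations S x"

definition sr_FFS :: "real set \<Rightarrow> bool" where
  "sr_FFS S \<longleftrightarrow> sr_atomic S \<and>
     (\<forall>x\<in>S - {0}. finite (sr_factorizations_mod_assoc S x))"

end

theory Submission
  imports Defs
begin

text \<open>If every nonzero element of S other than 1 is at least some c > 1, then 1 is the only
unit, a factorization of x into m atoms forces c ^ m \<le> x, and splitting nonatoms terminates;
so S is a BFS. In S = \<nat> \<union> [k, \<infinity>) with k \<ge> 2 this holds with c = 2, and every x \<in> (k, k + 1) is an
atom, since a product of two nonunits is either a natural number or at least 2k.
Hence (k + 1/2)^2 = a \<cdot> ((k + 1/2)^2 / a) is a factorization into two atoms for each of the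
infinitely many a \<in> (k + 1/4, k + 1/2), and S is not an FFS.\<close>

lemma power_size_le_prod_mset:
  fixes c :: real
  assumes "0 \<le> c" and "\<And>a. a \<in># m \<Longrightarrow> c \<le> a"
  shows "c ^ size m \<le> prod_mset m"
  using assms(2)
proof (induction m)
  case empty
  then show ?case by simp
next
  case (add a m)
  then have "c ^ size m \<le> prod_mset m" and "c \<le> a" by auto
  then have "c * c ^ size m \<le> a * prod_mset m"
    using assms(1) by (intro mult_mono) auto
  then show ?case by simp
qed

lemma finite_power_le:
  fixes c x :: real
  assumes "1 < c"
  shows "finite {n. c ^ n \<le> x}"
proof -
  obtain N where N: "x < c ^ N" using real_arch_pow[OF assms] by blast
  have "{n. c ^ n \<le> x} \<subseteq> {..<N}"
  proof
    fix n assume "n \<in> {n. c ^ n \<le> x}"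
    then have "c ^ n < c ^ N" using N by simp
    then show "n \<in> {..<N}" using assms by (simp add: power_strict_increasing_iff)
  qed
  then show ?thesis by (rule finite_subset) simp
qed

lemma sr_factorizations_mult:
  assumes "m \<in> sr_factorizations S x" and "n \<in> sr_factorizations S y"
  shows "m + n \<in> sr_factorizations S (x * y)"
  using assms unfolding sr_factorizations_def by auto

locale bounded_away_from_one =
  fixes S :: "real set" and c :: real
  assumes one_mem: "1 \<in> S"
    and gap: "S - {0, 1} \<subseteq> {c..}"
    and one_less: "1 < c"
begin

lemma one_le: "x \<in> S \<Longrightarrow> x \<noteq> 0 \<Longrightarrow> 1 \<le> x"
  using gap one_less by (cases "x = 1") auto

lemma unit_iff: "sr_unit S u \<longleftrightarrow> u = 1"
proof
  assume "sr_unit S u"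
  then obtain v where "u \<in> S - {0}" "v \<in> S - {0}" "u * v = 1"
    unfolding sr_unit_def by blast
  then have "1 \<le> u" "1 \<le> v" "u * v = 1" using one_le by auto
  moreover have "u * 1 \<le> u * v" using calculation by (intro mult_left_mono) auto
  ultimately show "u = 1" by simp
next
  assume "u = 1"
  then show "sr_unit S u" using one_mem unfolding sr_unit_def by force
qed

lemma assoc_class_eq: "sr_assoc_class S a = {a}"
  unfolding sr_assoc_class_def unit_iff by simp

lemma nonunit_ge: "x \<in> S \<Longrightarrow> x \<noteq> 0 \<Longrightarrow> \<not> sr_unit S x \<Longrightarrow> c \<le> x"
  using gap unit_iff by auto

lemma atom_ge: "sr_atom S a \<Longrightarrow> c \<le> a"
  unfolding sr_atom_def using nonunit_ge by auto

lemma factorization_exists: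
  assumes "x \<in> S" and "c \<le> x" and "x < c ^ N"
  shows "\<exists>m. m \<in> sr_factorizations S x"
  using assms
proof (induction N arbitrary: x)
  case 0
  then show ?case using one_less by simp
next
  case (Suc N)
  show ?case
  proof (cases "sr_atom S x")
    case True
    then have "{#x#} \<in> sr_factorizations S x" by (simp add: sr_factorizations_def)
    then show ?thesis ..
  next
    case False
    have "x \<noteq> 0" "\<not> sr_unit S x" using Suc.prems one_less unit_iff by auto
    with False Suc.prems(1) obtain b d where
      b: "b \<in> S" "b \<noteq> 0" "\<not> sr_unit S b" and d: "d \<in> S" "d \<noteq> 0" "\<not> sr_unit S d"
      and x: "x = b * d"
      unfolding sr_atom_def by auto
    have "c \<le> b" "c \<le> d" using b d nonunit_ge by auto
    have "b * c \<le> x" "c * d \<le> x"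
      using x \<open>c \<le> b\<close> \<open>c \<le> d\<close> one_less by (auto intro: mult_left_mono mult_right_mono)
    then have "b * c < c * c ^ N" "c * d < c * c ^ N" using Suc.prems(3) by auto
    then have "b < c ^ N" "d < c ^ N" using one_less by (simp_all add: mult.commute)
    then obtain mb md where "mb \<in> sr_factorizations S b" "md \<in> sr_factorizations S d"
      using Suc.IH b d \<open>c \<le> b\<close> \<open>c \<le> d\<close> by meson
    then show ?thesis using sr_factorizations_mult x by blast
  qed
qed

lemma atomic: "sr_atomic S"
  unfolding sr_atomic_def
proof (intro ballI impI)
  fix x assume x: "x \<in> S - {0}" "\<not> sr_unit S x"
  then have "c \<le> x" using nonunit_ge by auto
  moreover obtain N where "x < c ^ N" using real_arch_pow[OF one_less] by blast
  ultimately obtain m where m: "m \<in> sr_factorizations S x"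
    using factorization_exists x by blast
  moreover have "m \<noteq> {#}"
    using m x unit_iff unfolding sr_factorizations_def by auto
  ultimately show "\<exists>m\<in>sr_factorizations S x. m \<noteq> {#}" by blast
qed

lemma lengths_subset: "sr_lengths S x \<subseteq> {n. c ^ n \<le> x}"
proof
  fix n assume "n \<in> sr_lengths S x"
  then obtain m where "\<forall>a\<in>#m. sr_atom S a" "prod_mset m = x" "n = size m"
    unfolding sr_lengths_def sr_factorizations_def by auto
  then show "n \<in> {n. c ^ n \<le> x}"
    using power_size_le_prod_mset[of c m] atom_ge one_less by auto
qed

lemma BFS: "sr_BFS S"
  unfolding sr_BFS_def
  using atomic lengths_subset finite_power_le[OF one_less] finite_subset by blast

end

definition nat_union_ray :: "nat \<Rightarrow> real set" where
  "nat_union_ray k = \<nat> \<union> {real k..}"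

lemma positive_semiring_nat_union_ray: "positive_semiring (nat_union_ray k)"
  unfolding positive_semiring_def
proof (intro conjI ballI)
  show "nat_union_ray k \<subseteq> {0..}" by (auto simp: nat_union_ray_def elim: Nats_cases)
  show "0 \<in> nat_union_ray k" "1 \<in> nat_union_ray k" by (simp_all add: nat_union_ray_def)
next
  fix x y assume x: "x \<in> nat_union_ray k" and y: "y \<in> nat_union_ray k"
  have "0 \<le> x" "0 \<le> y" using x y by (auto simp: nat_union_ray_def elim: Nats_cases)
  then show "x + y \<in> nat_union_ray k"
    using x y by (auto simp: nat_union_ray_def)
  have ray: "real k \<le> u * v"
    if "real k \<le> u" "v \<in> nat_union_ray k" "v \<noteq> 0" for u v
  proof (cases "k = 0")
    case True
    then show ?thesis using that by (auto simp: nat_union_ray_def elim!: Nats_cases)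
  next
    case False
    then have "1 \<le> v" using that by (auto simp: nat_union_ray_def elim!: Nats_cases)
    then have "u \<le> u * v" using that by (simp add: mult_le_cancel_left1)
    then show ?thesis using that by linarith
  qed
  show "x * y \<in> nat_union_ray k"
  proof (cases "x \<in> \<nat> \<and> y \<in> \<nat> \<or> x = 0 \<or> y = 0")
    case True
    then show ?thesis by (auto simp: nat_union_ray_def)
  next
    case False
    then have "real k \<le> x * y"
      using x y ray[of x y] ray[of y x] by (auto simp: nat_union_ray_def mult.commute)
    then show ?thesis by (simp add: nat_union_ray_def)
  qed
qed

lemma nat_union_ray_bounded_away_from_one:
  assumes "2 \<le> k"
  shows "bounded_away_from_one (nat_union_ray k) 2"
proof
  show "1 \<in> nat_union_ray k" by (simp add: nat_union_ray_def)
  show "nat_union_ray k - {0, 1} \<subseteq> {2..}"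
    using assms by (auto simp: nat_union_ray_def elim!: Nats_cases)
qed simp

lemma atom_nat_union_ray:
  assumes "2 \<le> k" and "real k < x" and "x < real k + 1"
  shows "sr_atom (nat_union_ray k) x"
proof -
  interpret bounded_away_from_one "nat_union_ray k" 2
    using nat_union_ray_bounded_away_from_one[OF assms(1)] .
  have "x \<notin> \<nat>"
  proof
    assume "x \<in> \<nat>"
    then obtain n where "x = real n" by (auto elim: Nats_cases)
    with assms(2,3) have "k < n" "n < k + 1" by linarith+
    then show False by simp
  qed
  have no_split: False
    if "b \<in> nat_union_ray k" "d \<in> nat_union_ray k" "2 \<le> b" "2 \<le> d" "x = b * d" for b d
  proof (cases "b \<in> \<nat> \<and> d \<in> \<nat>")
    case True
    then show False using \<open>x \<notin> \<nat>\<close> \<open>x = b * d\<close> by simp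
  next
    case False
    then have "real k \<le> b \<or> real k \<le> d" using that by (auto simp: nat_union_ray_def)
    moreover have "b * 2 \<le> x" "2 * d \<le> x"
      using that by (auto intro: mult_left_mono mult_right_mono)
    ultimately have "2 * real k \<le> x" by auto
    then show False using assms by linarith
  qed
  show ?thesis
    unfolding sr_atom_def unit_iff
    using assms no_split gap by (auto simp: nat_union_ray_def)
qed

lemma cofactor_bounds:
  fixes a :: real
  assumes "0 < k" and "real k + 1/4 < a" and "a < real k + 1/2"
  shows "real k + 1/2 < (real k + 1/2)\<^sup>2 / a" and "(real k + 1/2)\<^sup>2 / a < real k + 1"
proof -
  have "0 < a" using assms(2) by linarith
  have "a * (real k + 1/2) < (real k + 1/2)\<^sup>2"
    using assms(3) by (simp add: power2_eq_square)
  then show "real k + 1/2 < (real k + 1/2)\<^sup>2 / a"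
    using \<open>0 < a\<close> by (simp add: pos_less_divide_eq mult.commute)
  have "(real k + 1/2)\<^sup>2 < (real k + 1) * (real k + 1/4)"
    using assms(1) by (simp add: power2_eq_square algebra_simps)
  also have "\<dots> < (real k + 1) * a" using assms(2) by simp
  finally show "(real k + 1/2)\<^sup>2 / a < real k + 1"
    using \<open>0 < a\<close> by (simp add: divide_less_eq mult.commute)
qed

lemma not_FFS_nat_union_ray:
  assumes "2 \<le> k"
  shows "\<not> sr_FFS (nat_union_ray k)"
proof
  assume FFS: "sr_FFS (nat_union_ray k)"
  interpret bounded_away_from_one "nat_union_ray k" 2
    using nat_union_ray_bounded_away_from_one[OF assms] .
  define X where "X = (real k + 1/2)\<^sup>2"
  define A where "A = {real k + 1/4<..<real k + 1/2}"
  define f where "f a = {#{a}, {X / a}#}" for a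
  have bounds: "real k + 1/2 < X / a" "X / a < real k + 1" if "a \<in> A" for a
    using cofactor_bounds[of k a] that assms unfolding A_def X_def by auto
  have image_subset: "f ` A \<subseteq> sr_factorizations_mod_assoc (nat_union_ray k) X"
  proof
    fix F assume "F \<in> f ` A"
    then obtain a where a: "a \<in> A" and F: "F = f a" by blast
    then have "0 < a" using assms unfolding A_def by simp
    have "{#a, X / a#} \<in> sr_factorizations (nat_union_ray k) X"
      using a bounds[OF a] \<open>0 < a\<close> assms
      unfolding sr_factorizations_def A_def by (auto intro!: atom_nat_union_ray)
    moreover have "F = image_mset (sr_assoc_class (nat_union_ray k)) {#a, X / a#}"
      by (simp add: F f_def assoc_class_eq)
    ultimately show "F \<in> sr_factorizations_mod_assoc (nat_union_ray k) X"
      unfolding sr_factorizations_mod_assoc_def by blast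
  qed
  have "inj_on f A"
  proof
    fix a a' assume "a \<in> A" "a' \<in> A" "f a = f a'"
    moreover have "{a} \<in># f a" by (simp add: f_def)
    ultimately have "a = a' \<or> a = X / a'" by (simp add: f_def)
    moreover have "a \<noteq> X / a'" using \<open>a \<in> A\<close> bounds[OF \<open>a' \<in> A\<close>] unfolding A_def by auto
    ultimately show "a = a'" by auto
  qed
  moreover have "infinite A" unfolding A_def by simp
  ultimately have "infinite (f ` A)" using finite_imageD by blast
  have "(real k + 1/2) * 1 \<le> X"
    unfolding X_def power2_eq_square
  proof (rule mult_left_mono)
    show "1 \<le> real k + 1/2" using assms by simp
  qed simp
  then have "X \<in> nat_union_ray k - {0}"
    by (auto simp: nat_union_ray_def)
  then have "finite (sr_factorizations_mod_assoc (nat_union_ray k) X)"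
    using FFS unfolding sr_FFS_def by blast
  with image_subset \<open>infinite (f ` A)\<close> show False
    using finite_subset by blast
qed

theorem mainTheorem8:
  fixes k :: nat
  assumes "k \<ge> 2"
  defines "S \<equiv> {real n | n. True} \<union> {x :: real. x \<ge> real k}"
  shows "positive_semiring S \<and> sr_BFS S \<and> \<not> sr_FFS S"
proof -
  have "S = nat_union_ray k"
    unfolding S_def nat_union_ray_def Nats_def by auto
  then show ?thesis
    using positive_semiring_nat_union_ray not_FFS_nat_union_ray[OF assms(1)]
      bounded_away_from_one.BFS[OF nat_union_ray_bounded_away_from_one[OF assms(1)]]
    by simp
qed

end
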